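(* Let $n\ge0$. For every Motzkin path $\gamma$ of length $n$, in the poset $\mathcal{M}_n$ we have $|\Delta\gamma|=\omega_{HU}(\gamma)+\omega_{DH}(\gamma)+\omega_{DU}(\gamma)+\omega_{HH}(\gamma)$ and $|\nabla\gamma|=\omega_{UH}(\gamma)+\omega_{HD}(\gamma)+\omega_{UD}(\gamma)+\omega^*_{HH}(\gamma)$. For every Grand Motzkin path $\gamma$ of length $n$, in the poset $\mathcal{GM}_n$ we have $|\Delta\gamma|=\omega_{HU}(\gamma)+\omega_{DH}(\gamma)+\omega_{DU}(\gamma)+\omega_{HH}(\gamma)$ and $|\nabla\gamma|=\omega_{UH}(\gamma)+\omega_{HD}(\gamma)+\omega_{UD}(\gamma)+\omega_{HH}(\gamma)$.
   Context: Steps: $U=(1,1)$, $D=(1,-1)$, $H=(1,0)$. A Grand Motzkin path of length $n$ is a lattice path from $(0,0)$ to $(n,0)$ with steps $U,D,H$; a Motzkin path is a Grand Motzkin path never going below the $x$-axis. $\mathcal{M}_n$ (resp. $\mathcal{GM}_n$) is the set of Motzkin (resp. Grand Motzkin) paths of length $n$, partially ordered by $\gamma_1\le\gamma_2$ iff $\gamma_1$ lies weakly below $\gamma_2$. $\Delta x$ is the set of elements covering $x$, $\nabla x$ the set of elements covered by $x$. Paths are identified with words of steps; $\omega_\alpha(\gamma)$ is the number of occurrences of the word $\alpha$ as a factor (contiguous subword, overlapping occurrences counted separately) of $\gamma$; $\omega^*_{HH}(\gamma)$ is the number of occurrences of the factor $HH$ not lying on the $x$-axis. *)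

theory Defs
  imports Main
begin

datatype step = U | D | H

type_synonym path = "step list"

definition stepval :: "step \<Rightarrow> int" where
  "stepval s = (case s of U \<Rightarrow> 1 | D \<Rightarrow> -1 | H \<Rightarrow> 0)"

definition height :: "path \<Rightarrow> nat \<Rightarrow> int" where
  "height p i = sum_list (map stepval (take i p))"

definition grand_motzkin :: "nat \<Rightarrow> path set" where
  "grand_motzkin n = {p. length p = n \<and> height p n = 0}"

definition motzkin :: "nat \<Rightarrow> path set" where
  "motzkin n = {p \<in> grand_motzkin n. \<forall>i\<le>n. height p i \<ge> 0}"

definition below :: "path \<Rightarrow> path \<Rightarrow> bool" where
  "below p q \<longleftrightarrow> length p = length q \<and> (\<forall>i\<le>length p. height p i \<le> height q i)"

definition covers_in :: "path set \<Rightarrow> path \<Rightarrow> path \<Rightarrow> bool" where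
  "covers_in S x y \<longleftrightarrow> x \<in> S \<and> y \<in> S \<and> below x y \<and> x \<noteq> y \<and>
     \<not> (\<exists>z\<in>S. below x z \<and> below z y \<and> z \<noteq> x \<and> z \<noteq> y)"

definition up_covers :: "path set \<Rightarrow> path \<Rightarrow> path set" where
  "up_covers S x = {y. covers_in S x y}"

definition down_covers :: "path set \<Rightarrow> path \<Rightarrow> path set" where
  "down_covers S x = {y. covers_in S y x}"

definition occ :: "step list \<Rightarrow> path \<Rightarrow> nat" where
  "occ a p = card {i. i + length a \<le> length p \<and> take (length a) (drop i p) = a}"

definition occ_HH_star :: "path \<Rightarrow> nat" where
  "occ_HH_star p = card {i. i + 2 \<le> length p \<and> take 2 (drop i p) = [H, H] \<and> height p i \<noteq> 0}"

end

theory Submission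
  imports Defs
begin

text \<open>A path is determined by its height profile, and the order is pointwise comparison of
  profiles. If \<open>x < y\<close>, then among the abscissae where \<open>y\<close> is strictly above \<open>x\<close> one where \<open>x\<close>
  is lowest is a (weak) local minimum of \<open>x\<close>, and raising \<open>x\<close> by one unit there stays below
  \<open>y\<close>. Hence the covers of \<open>x\<close> are exactly the paths obtained by raising a single vertex by
  one, which on words replaces a factor \<open>HU, DH, DU, HH\<close> by \<open>UH, HD, HH, UD\<close> respectively.
  Dually, lowering a vertex acts on the factors \<open>UH, HD, UD, HH\<close>; for Motzkin paths it is
  forbidden only when the vertex lies on the axis, which among these factors can only happen
  for \<open>HH\<close>.\<close>

lemma stepval_simps [simp]: "stepval U = 1" "stepval D = -1" "stepval H = 0"
  by (simp_all add: stepval_def)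

lemma height_0 [simp]: "height p 0 = 0"
  by (simp add: height_def)

lemma height_Suc:
  "height p (Suc k) = height p k + (if k < length p then stepval (p ! k) else 0)"
  by (simp add: height_def take_Suc_conv_app_nth)

lemma height_Suc_diff: "\<bar>height p (Suc k) - height p k\<bar> \<le> 1"
  by (cases "p ! k") (simp_all add: height_Suc)

lemma eq_if_heights_eq:
  assumes "length p = length q" and "\<forall>k\<le>length p. height p k = height q k"
  shows "p = q"
proof (rule nth_equalityI)
  fix k assume "k < length p"
  with assms have "stepval (p ! k) = stepval (q ! k)"
    using height_Suc[of p k] height_Suc[of q k] by force
  then show "p ! k = q ! k"
    by (cases "p ! k"; cases "q ! k") simp_all
qed (fact assms(1))

lemma height_update_adjacent:
  assumes "Suc j < length p"
    and "stepval a = stepval (p ! j) + c" and "stepval b = stepval (p ! Suc j) - c"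
  shows "height (p[j := a, Suc j := b]) k = height p k + (if k = Suc j then c else 0)"
proof (induction k)
  case (Suc k)
  then show ?case
    using assms by (auto simp: height_Suc nth_list_update)
qed simp

fun step_up :: "step \<Rightarrow> step" where
  "step_up D = H" | "step_up H = U" | "step_up U = U"

fun step_down :: "step \<Rightarrow> step" where
  "step_down U = H" | "step_down H = D" | "step_down D = D"

lemma step_up_neq_D [simp]: "step_up s \<noteq> D"
  and step_down_neq_U [simp]: "step_down s \<noteq> U"
  by (cases s; simp)+

lemma step_down_step_up [simp]: "s \<noteq> U \<Longrightarrow> step_down (step_up s) = s"
  and step_up_step_down [simp]: "s \<noteq> D \<Longrightarrow> step_up (step_down s) = s"
  by (cases s; simp)+

lemma stepval_step_up: "s \<noteq> U \<Longrightarrow> stepval (step_up s) = stepval s + 1"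
  by (cases s) simp_all

lemma stepval_step_down: "s \<noteq> D \<Longrightarrow> stepval (step_down s) = stepval s - 1"
  by (cases s) simp_all

text \<open>Position \<open>j\<close> refers to the factor formed by steps \<open>j\<close> and \<open>Suc j\<close>; the vertex moved by
  \<open>raise\<close> and \<open>lower\<close> is the one between them, at abscissa \<open>Suc j\<close>. \<open>raise p j\<close> is meant only
  for \<open>j \<in> valleys p\<close> and \<open>lower p j\<close> only for \<open>j \<in> peaks p\<close>; elsewhere \<open>step_up U = U\<close> and
  \<open>step_down D = D\<close> are junk values.\<close>

definition raise :: "path \<Rightarrow> nat \<Rightarrow> path" where
  "raise p j = p[j := step_up (p ! j), Suc j := step_down (p ! Suc j)]"

definition lower :: "path \<Rightarrow> nat \<Rightarrow> path" where
  "lower p j = p[j := step_down (p ! j), Suc j := step_up (p ! Suc j)]"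

definition valleys :: "path \<Rightarrow> nat set" where
  "valleys p = {j. Suc j < length p \<and> p ! j \<noteq> U \<and> p ! Suc j \<noteq> D}"

definition peaks :: "path \<Rightarrow> nat set" where
  "peaks p = {j. Suc j < length p \<and> p ! j \<noteq> D \<and> p ! Suc j \<noteq> U}"

lemma length_raise [simp]: "length (raise p j) = length p"
  by (simp add: raise_def)

lemma length_lower [simp]: "length (lower p j) = length p"
  by (simp add: lower_def)

lemma height_raise:
  "j \<in> valleys p \<Longrightarrow> height (raise p j) k = height p k + (if k = Suc j then 1 else 0)"
  unfolding raise_def valleys_def
  by (rule height_update_adjacent) (simp_all add: stepval_step_up stepval_step_down)

lemma height_lower:
  "j \<in> peaks p \<Longrightarrow> height (lower p j) k = height p k - (if k = Suc j then 1 else 0)"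
  unfolding lower_def peaks_def
  using height_update_adjacent[of j p _ "-1"] by (simp add: stepval_step_up stepval_step_down)

lemma valley_iff_local_min:
  "Suc j < length p \<Longrightarrow>
     j \<in> valleys p \<longleftrightarrow> height p (Suc j) \<le> height p j \<and> height p (Suc j) \<le> height p (Suc (Suc j))"
  by (cases "p ! j"; cases "p ! Suc j") (simp_all add: valleys_def height_Suc)

lemma update_adjacent_twice: "p[j := a, Suc j := b, j := c, Suc j := d] = p[j := c, Suc j := d]"
  by (metis list_update_overwrite list_update_swap n_not_Suc_n)

lemma lower_raise:
  assumes "j \<in> valleys p"
  shows "j \<in> peaks (raise p j)" and "lower (raise p j) j = p"
  using assms by (simp_all add: valleys_def peaks_def raise_def lower_def nth_list_update
      update_adjacent_twice)

lemma raise_lower: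
  assumes "j \<in> peaks p"
  shows "j \<in> valleys (lower p j)" and "raise (lower p j) j = p"
  using assms by (simp_all add: valleys_def peaks_def raise_def lower_def nth_list_update
      update_adjacent_twice)

lemma inj_on_raise: "inj_on (raise p) (valleys p)"
proof (rule inj_onI)
  fix j j' assume j: "j \<in> valleys p" and j': "j' \<in> valleys p" and eq: "raise p j = raise p j'"
  have "height p (Suc j) + 1 = height (raise p j) (Suc j)"
    using j by (simp add: height_raise)
  also have "\<dots> = height p (Suc j) + (if j = j' then 1 else 0)"
    using j' by (simp add: eq height_raise)
  finally show "j = j'"
    by (simp split: if_splits)
qed

lemma inj_on_lower: "inj_on (lower p) (peaks p)"
proof (rule inj_onI)
  fix j j' assume j: "j \<in> peaks p" and j': "j' \<in> peaks p" and eq: "lower p j = lower p j'"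
  have "height p (Suc j) - 1 = height (lower p j) (Suc j)"
    using j by (simp add: height_lower)
  also have "\<dots> = height p (Suc j) - (if j = j' then 1 else 0)"
    using j' by (simp add: eq height_lower)
  finally show "j = j'"
    by (simp split: if_splits)
qed

definition motzkin_paths :: "bool \<Rightarrow> nat \<Rightarrow> path set" where
  "motzkin_paths nonneg n =
     {p. length p = n \<and> height p n = 0 \<and> (nonneg \<longrightarrow> (\<forall>k\<le>n. 0 \<le> height p k))}"

lemma motzkin_eq_motzkin_paths: "motzkin n = motzkin_paths True n"
  by (auto simp: motzkin_def grand_motzkin_def motzkin_paths_def)

lemma grand_motzkin_eq_motzkin_paths: "grand_motzkin n = motzkin_paths False n"
  by (auto simp: grand_motzkin_def motzkin_paths_def)

lemma raise_in_motzkin_paths: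
  assumes "p \<in> motzkin_paths nonneg n" and "j \<in> valleys p"
  shows "raise p j \<in> motzkin_paths nonneg n"
proof -
  have "Suc j < n"
    using assms by (simp add: motzkin_paths_def valleys_def)
  with assms show ?thesis
    by (force simp: motzkin_paths_def height_raise)
qed

lemma lower_in_motzkin_paths_iff:
  assumes "p \<in> motzkin_paths nonneg n" and "j \<in> peaks p"
  shows "lower p j \<in> motzkin_paths nonneg n \<longleftrightarrow> (nonneg \<longrightarrow> 0 < height p (Suc j))"
proof -
  have "Suc j < n"
    using assms by (simp add: motzkin_paths_def peaks_def)
  with assms show ?thesis
    by (force simp: motzkin_paths_def height_lower)
qed

lemma below_raise: "j \<in> valleys p \<Longrightarrow> below p (raise p j)"
  by (simp add: below_def height_raise)

lemma raise_neq_self: "j \<in> valleys p \<Longrightarrow> raise p j \<noteq> p"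
  using height_raise[of j p "Suc j"] by force

lemma between_raise:
  assumes "j \<in> valleys p" and "below p q" and "below q (raise p j)"
  shows "q = p \<or> q = raise p j"
proof -
  have len: "length q = length p"
    using assms(2) by (simp add: below_def)
  have ge: "height p k \<le> height q k" and le: "height q k \<le> height p k + (if k = Suc j then 1 else 0)"
    if "k \<le> length p" for k
    using assms that by (auto simp: below_def height_raise)
  show ?thesis
  proof (cases "height q (Suc j) = height p (Suc j)")
    case True
    then have "\<forall>k\<le>length q. height q k = height p k"
      using ge le len by (metis add.right_neutral order_antisym)
    then show ?thesis
      using len eq_if_heights_eq by blast
  next
    case False
    then have "\<forall>k\<le>length q. height q k = height (raise p j) k"
      using ge le len assms(1) by (force simp: height_raise)
    then show ?thesis
      using len eq_if_heights_eq by auto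
  qed
qed

lemma exists_raise_below:
  assumes x: "x \<in> motzkin_paths nonneg n" and y: "y \<in> motzkin_paths nonneg n"
    and "below x y" and "x \<noteq> y"
  obtains j where "j \<in> valleys x" and "below (raise x j) y"
proof -
  let ?gap = "{k. k \<le> n \<and> height x k < height y k}"
  have len: "length x = n" "length y = n"
    using x y by (simp_all add: motzkin_paths_def)
  have le: "height x k \<le> height y k" if "k \<le> n" for k
    using \<open>below x y\<close> len that by (simp add: below_def)
  have "?gap \<noteq> {}"
  proof
    assume "?gap = {}"
    then have "\<forall>k\<le>length x. height x k = height y k"
      using le len by force
    with len \<open>x \<noteq> y\<close> show False
      using eq_if_heights_eq by simp
  qed
  then obtain i where i: "i \<in> ?gap" and min: "\<forall>k\<in>?gap. height x i \<le> height x k"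
    using ex_is_arg_min_if_finite[of ?gap "height x"] by (auto simp: is_arg_min_linorder)
  have "i \<noteq> 0"
    using i by (cases i) auto
  moreover have "i \<noteq> n"
    using i x y by (auto simp: motzkin_paths_def)
  ultimately obtain j where ij: "i = Suc j" and "Suc j < n"
    using i by (cases i) auto
  \<comment> \<open>At a neighbour of \<open>Suc j\<close> either minimality applies, or \<open>x\<close> and \<open>y\<close> agree there
    and the slope of \<open>y\<close> is at most one.\<close>
  have "height x (Suc j) \<le> height x j"
  proof (cases "j \<in> ?gap")
    case False
    with i ij have "height x j = height y j"
      using le[of j] by simp
    then show ?thesis
      using height_Suc_diff[of y j] i ij by (simp add: abs_le_iff)
  qed (use min ij in auto)
  moreover have "height x (Suc j) \<le> height x (Suc (Suc j))"
  proof (cases "Suc (Suc j) \<in> ?gap")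
    case False
    with \<open>Suc j < n\<close> have "height x (Suc (Suc j)) = height y (Suc (Suc j))"
      using le[of "Suc (Suc j)"] by simp
    then show ?thesis
      using height_Suc_diff[of y "Suc j"] i ij by (simp add: abs_le_iff)
  qed (use min ij in auto)
  ultimately have valley: "j \<in> valleys x"
    using valley_iff_local_min \<open>Suc j < n\<close> len by blast
  moreover have "below (raise x j) y"
    using le i ij len valley by (auto simp: below_def height_raise)
  ultimately show thesis ..
qed

lemma covers_in_motzkin_paths_iff:
  "covers_in (motzkin_paths nonneg n) x y \<longleftrightarrow>
     x \<in> motzkin_paths nonneg n \<and> (\<exists>j\<in>valleys x. y = raise x j)"
    (is "covers_in ?M x y \<longleftrightarrow> _")
proof
  assume cov: "covers_in ?M x y"
  then have x: "x \<in> ?M" and "y \<in> ?M" "below x y" "x \<noteq> y"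
    by (simp_all add: covers_in_def)
  then obtain j where j: "j \<in> valleys x" and "below (raise x j) y"
    using exists_raise_below by blast
  with cov x have "raise x j = y"
    unfolding covers_in_def
    using below_raise raise_neq_self raise_in_motzkin_paths by blast
  with x j show "x \<in> ?M \<and> (\<exists>j\<in>valleys x. y = raise x j)"
    by blast
next
  assume "x \<in> ?M \<and> (\<exists>j\<in>valleys x. y = raise x j)"
  then obtain j where "x \<in> ?M" "j \<in> valleys x" "y = raise x j"
    by blast
  then show "covers_in ?M x y"
    using below_raise raise_neq_self raise_in_motzkin_paths between_raise
    by (fastforce simp: covers_in_def)
qed

lemma up_covers_motzkin_paths:
  "x \<in> motzkin_paths nonneg n \<Longrightarrow> up_covers (motzkin_paths nonneg n) x = raise x ` valleys x"
  by (auto simp: up_covers_def covers_in_motzkin_paths_iff)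

lemma down_covers_motzkin_paths:
  assumes x: "x \<in> motzkin_paths nonneg n"
  shows "down_covers (motzkin_paths nonneg n) x =
           lower x ` {j \<in> peaks x. nonneg \<longrightarrow> 0 < height x (Suc j)}"
proof (intro set_eqI iffI)
  fix y assume "y \<in> down_covers (motzkin_paths nonneg n) x"
  then obtain j where y: "y \<in> motzkin_paths nonneg n" and "j \<in> valleys y" "x = raise y j"
    by (auto simp: down_covers_def covers_in_motzkin_paths_iff)
  then have "j \<in> peaks x" "y = lower x j"
    using lower_raise by auto
  with x y show "y \<in> lower x ` {j \<in> peaks x. nonneg \<longrightarrow> 0 < height x (Suc j)}"
    using lower_in_motzkin_paths_iff by blast
next
  fix y assume "y \<in> lower x ` {j \<in> peaks x. nonneg \<longrightarrow> 0 < height x (Suc j)}"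
  then obtain j where j: "j \<in> peaks x" "nonneg \<longrightarrow> 0 < height x (Suc j)" and y: "y = lower x j"
    by blast
  then have "y \<in> motzkin_paths nonneg n"
    using x lower_in_motzkin_paths_iff by blast
  moreover have "j \<in> valleys y" "x = raise y j"
    using raise_lower j(1) y by auto
  ultimately show "y \<in> down_covers (motzkin_paths nonneg n) x"
    by (auto simp: down_covers_def covers_in_motzkin_paths_iff)
qed

lemma take_2_drop_eq_iff:
  assumes "Suc i < length p"
  shows "take 2 (drop i p) = [a, b] \<longleftrightarrow> p ! i = a \<and> p ! Suc i = b"
proof -
  have "drop i p = p ! i # p ! Suc i # drop (Suc (Suc i)) p"
    using assms by (simp add: Cons_nth_drop_Suc)
  then show ?thesis
    by (simp add: numeral_2_eq_2)
qed

lemma occ_pair: "occ [a, b] p = card {j. Suc j < length p \<and> p ! j = a \<and> p ! Suc j = b}"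
proof -
  have "i + length [a, b] \<le> length p \<and> take (length [a, b]) (drop i p) = [a, b] \<longleftrightarrow>
          Suc i < length p \<and> p ! i = a \<and> p ! Suc i = b" for i
    using take_2_drop_eq_iff[of i p a b] by (auto simp: numeral_2_eq_2)
  then show ?thesis
    unfolding occ_def by presburger
qed

lemma occ_HH_star_eq:
  "occ_HH_star p = card {j. Suc j < length p \<and> p ! j = H \<and> p ! Suc j = H \<and> height p j \<noteq> 0}"
proof -
  have "i + 2 \<le> length p \<and> take 2 (drop i p) = [H, H] \<and> height p i \<noteq> 0 \<longleftrightarrow>
          Suc i < length p \<and> p ! i = H \<and> p ! Suc i = H \<and> height p i \<noteq> 0" for i
    using take_2_drop_eq_iff[of i p H H] by auto
  then show ?thesis
    unfolding occ_HH_star_def by presburger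
qed

lemma card_pair_positions:
  assumes "finite P"
  shows "card {j. Suc j < length p \<and> (p ! j, p ! Suc j) \<in> P} = (\<Sum>(a, b)\<in>P. occ [a, b] p)"
proof -
  define pos where "pos ab = {j. Suc j < length p \<and> (p ! j, p ! Suc j) = ab}" for ab
  have "{j. Suc j < length p \<and> (p ! j, p ! Suc j) \<in> P} = (\<Union>ab\<in>P. pos ab)"
    by (auto simp: pos_def)
  moreover   have "finite (pos ab)" for ab
    by (rule finite_subset[of _ "{..<length p}"]) (auto simp: pos_def)
  with assms have "card (\<Union>ab\<in>P. pos ab) = (\<Sum>ab\<in>P. card (pos ab))"
    by (intro card_UN_disjoint) (auto simp: pos_def)
  moreover have "(\<Sum>ab\<in>P. card (pos ab)) = (\<Sum>(a, b)\<in>P. occ [a, b] p)"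
    by (intro sum.cong) (auto simp: pos_def occ_pair)
  ultimately show ?thesis
    by simp
qed

lemma card_valleys: "card (valleys p) = occ [H,U] p + occ [D,H] p + occ [D,U] p + occ [H,H] p"
proof -
  have "s \<noteq> U \<and> t \<noteq> D \<longleftrightarrow> (s, t) \<in> {(H,U), (D,H), (D,U), (H,H)}" for s t
    by (cases s; cases t) simp_all
  then have "card (valleys p) =
      card {j. Suc j < length p \<and> (p ! j, p ! Suc j) \<in> {(H,U), (D,H), (D,U), (H,H)}}"
    unfolding valleys_def by presburger
  also have "\<dots> = (\<Sum>(a, b)\<in>{(H,U), (D,H), (D,U), (H,H)}. occ [a, b] p)"
    by (rule card_pair_positions) simp
  finally show ?thesis
    by simp
qed

lemma card_peaks: "card (peaks p) = occ [U,H] p + occ [H,D] p + occ [U,D] p + occ [H,H] p"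
proof -
  have "s \<noteq> D \<and> t \<noteq> U \<longleftrightarrow> (s, t) \<in> {(U,H), (H,D), (U,D), (H,H)}" for s t
    by (cases s; cases t) simp_all
  then have "card (peaks p) =
      card {j. Suc j < length p \<and> (p ! j, p ! Suc j) \<in> {(U,H), (H,D), (U,D), (H,H)}}"
    unfolding peaks_def by presburger
  also have "\<dots> = (\<Sum>(a, b)\<in>{(U,H), (H,D), (U,D), (H,H)}. occ [a, b] p)"
    by (rule card_pair_positions) simp
  finally show ?thesis
    by simp
qed

lemma card_positive_peaks:
  assumes nonneg: "\<forall>k\<le>length p. 0 \<le> height p k"
  shows "card {j \<in> peaks p. 0 < height p (Suc j)} =
           occ [U,H] p + occ [H,D] p + occ [U,D] p + occ_HH_star p"
proof -
  let ?strict = "{j. Suc j < length p \<and> (p ! j, p ! Suc j) \<in> {(U,H), (H,D), (U,D)}}"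
  let ?flat = "{j. Suc j < length p \<and> p ! j = H \<and> p ! Suc j = H \<and> height p j \<noteq> 0}"
  have "j \<in> peaks p \<and> 0 < height p (Suc j) \<longleftrightarrow> j \<in> ?strict \<union> ?flat" for j
  proof (cases "Suc j < length p")
    case True
    then have "0 \<le> height p j" "0 \<le> height p (Suc (Suc j))"
      using nonneg by simp_all
    with True show ?thesis
      by (cases "p ! j"; cases "p ! Suc j") (auto simp: peaks_def height_Suc)
  qed (simp add: peaks_def)
  then have "{j \<in> peaks p. 0 < height p (Suc j)} = ?strict \<union> ?flat"
    by blast
  then have "card {j \<in> peaks p. 0 < height p (Suc j)} = card (?strict \<union> ?flat)"
    by simp
  also have "\<dots> = card ?strict + card ?flat"
    by (rule card_Un_disjoint) (auto intro: finite_subset[of _ "{..<length p}"])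
  also have "card ?strict = (\<Sum>(a, b)\<in>{(U,H), (H,D), (U,D)}. occ [a, b] p)"
    by (rule card_pair_positions) simp
  finally show ?thesis
    by (simp add: occ_HH_star_eq)
qed

lemma card_up_covers_motzkin_paths:
  assumes "x \<in> motzkin_paths nonneg n"
  shows "card (up_covers (motzkin_paths nonneg n) x) =
           occ [H,U] x + occ [D,H] x + occ [D,U] x + occ [H,H] x"
  using assms by (simp add: up_covers_motzkin_paths card_image inj_on_raise card_valleys)

lemma card_down_covers_grand_motzkin:
  assumes "x \<in> motzkin_paths False n"
  shows "card (down_covers (motzkin_paths False n) x) =
           occ [U,H] x + occ [H,D] x + occ [U,D] x + occ [H,H] x"
  using assms by (simp add: down_covers_motzkin_paths card_image inj_on_lower card_peaks)

lemma card_down_covers_motzkin: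
  assumes "x \<in> motzkin_paths True n"
  shows "card (down_covers (motzkin_paths True n) x) =
           occ [U,H] x + occ [H,D] x + occ [U,D] x + occ_HH_star x"
proof -
  have "inj_on (lower x) {j \<in> peaks x. 0 < height x (Suc j)}"
    by (rule inj_on_subset[OF inj_on_lower]) blast
  moreover have "\<forall>k\<le>length x. 0 \<le> height x k"
    using assms by (simp add: motzkin_paths_def)
  ultimately show ?thesis
    using assms by (simp add: down_covers_motzkin_paths card_image card_positive_peaks)
qed

theorem mainTheorem6:
  fixes n :: nat
  shows "(\<forall>\<gamma>\<in>motzkin n.
            card (up_covers (motzkin n) \<gamma>) =
              occ [H,U] \<gamma> + occ [D,H] \<gamma> + occ [D,U] \<gamma> + occ [H,H] \<gamma> \<and>
            card (down_covers (motzkin n) \<gamma>) =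
              occ [U,H] \<gamma> + occ [H,D] \<gamma> + occ [U,D] \<gamma> + occ_HH_star \<gamma>) \<and>
         (\<forall>\<gamma>\<in>grand_motzkin n.
            card (up_covers (grand_motzkin n) \<gamma>) =
              occ [H,U] \<gamma> + occ [D,H] \<gamma> + occ [D,U] \<gamma> + occ [H,H] \<gamma> \<and>
            card (down_covers (grand_motzkin n) \<gamma>) =
              occ [U,H] \<gamma> + occ [H,D] \<gamma> + occ [U,D] \<gamma> + occ [H,H] \<gamma>)"
  unfolding motzkin_eq_motzkin_paths grand_motzkin_eq_motzkin_paths
  using card_up_covers_motzkin_paths card_down_covers_motzkin card_down_covers_grand_motzkin
  by blast

end
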